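(* Let $K$ be a field of characteristic $p\neq 2$, and let $Os^+(0,0)$ be the $K$-algebra with basis $\{e_i: i\in\mathbb Z,\ i\ge -1\}$ and multiplication $e_i\star e_j=(i+j+2)e_{i+j}$. Then every multilinear polynomial identity of degree $3$ of $(Os^+(0,0),\star)$ follows from the commutativity identity $t_1t_2=t_2t_1$. *)

theory Defs
  imports Main "HOL-Library.Multiset"
begin

text \<open>Elements of Os+(0,0) over K: coefficient functions c on the integers with finite
support contained in {i. i >= -1}; c i is the coefficient of the basis vector e_i.\<close>

definition os_carrier :: "(int \<Rightarrow> 'k::field) set" where
  "os_carrier = {x. finite {i. x i \<noteq> 0} \<and> (\<forall>i < -1. x i = 0)}"

text \<open>Bilinear extension of e_i * e_j = (i+j+2) e_(i+j): the coefficient of e_n in x*y is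
the sum over i+j=n (with i,j >= -1) of (i+j+2) x_i y_j.\<close>
definition os_mult :: "(int \<Rightarrow> 'k::field) \<Rightarrow> (int \<Rightarrow> 'k) \<Rightarrow> (int \<Rightarrow> 'k)" where
  "os_mult x y = (\<lambda>n. \<Sum>i\<in>{-1..n+1}. of_int (n + 2) * x i * y (n - i))"

datatype ncterm = V nat | M ncterm ncterm

fun tvars :: "ncterm \<Rightarrow> nat multiset" where
  "tvars (V i) = {#i#}"
| "tvars (M a b) = tvars a + tvars b"

text \<open>Polynomials of the free nonassociative algebra over K: finitely supported
coefficient functions on nonassociative monomials.\<close>
definition fin_poly :: "(ncterm \<Rightarrow> 'k::field) \<Rightarrow> bool" where
  "fin_poly p \<longleftrightarrow> finite {t. p t \<noteq> 0}"

definition mon :: "ncterm \<Rightarrow> ncterm \<Rightarrow> 'k::field" where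
  "mon t = (\<lambda>s. if s = t then 1 else 0)"

definition pmul :: "(ncterm \<Rightarrow> 'k::field) \<Rightarrow> (ncterm \<Rightarrow> 'k) \<Rightarrow> (ncterm \<Rightarrow> 'k)" where
  "pmul p q = (\<lambda>t. case t of V _ \<Rightarrow> 0 | M a b \<Rightarrow> p a * q b)"

text \<open>Multilinear of degree 3 in the variables t_1,t_2,t_3 (here V 0, V 1, V 2).\<close>
definition multilinear3 :: "(ncterm \<Rightarrow> 'k::field) \<Rightarrow> bool" where
  "multilinear3 p \<longleftrightarrow> fin_poly p \<and> (\<forall>t. p t \<noteq> 0 \<longrightarrow> tvars t = {#0, 1, 2#})"

fun os_evt :: "(nat \<Rightarrow> int \<Rightarrow> 'k::field) \<Rightarrow> ncterm \<Rightarrow> (int \<Rightarrow> 'k)" where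
  "os_evt v (V i) = v i"
| "os_evt v (M a b) = os_mult (os_evt v a) (os_evt v b)"

definition os_evp :: "(nat \<Rightarrow> int \<Rightarrow> 'k::field) \<Rightarrow> (ncterm \<Rightarrow> 'k) \<Rightarrow> (int \<Rightarrow> 'k)" where
  "os_evp v p = (\<lambda>n. \<Sum>t\<in>{t. p t \<noteq> 0}. p t * os_evt v t n)"

definition os_identity :: "(ncterm \<Rightarrow> 'k::field) \<Rightarrow> bool" where
  "os_identity p \<longleftrightarrow> (\<forall>v. (\<forall>i. v i \<in> os_carrier) \<longrightarrow> os_evp v p = (\<lambda>_. 0))"

text \<open>The T-ideal of the free nonassociative algebra generated by t1 t2 - t2 t1: the
smallest subspace containing all substituted instances s1 s2 - s2 s1 (s1, s2 monomials,
which span all substitutions by bilinearity) and closed under left and right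
multiplication by arbitrary polynomials.\<close>
inductive_set comm_tideal :: "(ncterm \<Rightarrow> 'k::field) set" where
  zero: "(\<lambda>_. 0) \<in> comm_tideal"
| add: "p \<in> comm_tideal \<Longrightarrow> q \<in> comm_tideal \<Longrightarrow> (\<lambda>t. p t + q t) \<in> comm_tideal"
| smult: "p \<in> comm_tideal \<Longrightarrow> (\<lambda>t. c * p t) \<in> comm_tideal"
| gen: "(\<lambda>t. mon (M s1 s2) t - mon (M s2 s1) t) \<in> comm_tideal"
| mulL: "p \<in> comm_tideal \<Longrightarrow> fin_poly q \<Longrightarrow> pmul q p \<in> comm_tideal"
| mulR: "p \<in> comm_tideal \<Longrightarrow> fin_poly q \<Longrightarrow> pmul p q \<in> comm_tideal"

end

theory Submission
  imports Defs
begin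

text \<open>Modulo commutativity the twelve multilinear monomials of degree 3 fall into three
  classes, indexed by the variable t_k that stands alone: (t_i t_j) t_k, (t_j t_i) t_k,
  t_k (t_i t_j), t_k (t_j t_i). Hence a multilinear f lies in the T-ideal of commutativity
  as soon as its coefficients on each class sum to zero.

  Substitute e_{-1} for t_c and e_0 for the other two variables. Since
  e_{-1} e_0 = e_0 e_{-1} = e_{-1} and e_0 e_0 = 2 e_0, a monomial evaluates to 2 e_{-1} if
  t_c stands alone and to e_{-1} otherwise. An identity f thus gives S + S_c = 0 for
  c = 0, 1, 2, where S_c are the class sums and S = S_0 + S_1 + S_2; so 4 S = 0, and in
  characteristic not 2 every S_c vanishes.\<close>

lemma two_neq_zero_if_CHAR_neq_2:
  assumes "CHAR('k::field) \<noteq> 2"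
  shows "(2::'k) \<noteq> 0"
proof
  assume "(2::'k) = 0"
  then have "CHAR('k) dvd 2"
    using of_nat_eq_0_iff_char_dvd[of 2, where 'a='k] by simp
  then have "0 < CHAR('k)" "CHAR('k) \<le> 2"
    by (auto intro: dvd_imp_le Nat.gr0I)
  with assms CHAR_not_1[where 'a='k] show False
    by linarith
qed

definition os_e :: "'k::field \<Rightarrow> int \<Rightarrow> int \<Rightarrow> 'k" where
  "os_e a k = (\<lambda>n. if n = k then a else 0)"

lemma os_e_in_carrier: "k \<ge> -1 \<Longrightarrow> os_e a k \<in> os_carrier"
  unfolding os_carrier_def os_e_def by (auto intro: finite_subset[of _ "{k}"])

lemma os_mult_e:
  assumes "i \<ge> -1" "j \<ge> -1"
  shows "os_mult (os_e a i) (os_e b j) = os_e (a * b * of_int (i + j + 2)) (i + j)"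
proof
  fix n
  have "os_mult (os_e a i) (os_e b j) n
      = (\<Sum>l\<in>{-1..n+1}. if l = i then of_int (n + 2) * a * os_e b j (n - i) else 0)"
    unfolding os_mult_def by (rule sum.cong) (auto simp: os_e_def)
  also have "\<dots> = os_e (a * b * of_int (i + j + 2)) (i + j) n"
    using assms by (auto simp: os_e_def algebra_simps)
  finally show "os_mult (os_e a i) (os_e b j) n = os_e (a * b * of_int (i + j + 2)) (i + j) n" .
qed

text \<open>The summation range {-1..n+1} is symmetric under i \<mapsto> n - i, so no support
  condition is needed.\<close>
lemma os_mult_commute: "os_mult x y = os_mult y x"
proof
  fix n
  have "(\<Sum>i\<in>{-1..n+1}. of_int (n + 2) * x i * y (n - i))
      = (\<Sum>i\<in>{-1..n+1}. of_int (n + 2) * x (n - i) * y (n - (n - i)))"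
    by (rule sum.reindex_bij_witness[of _ "\<lambda>i. n - i" "\<lambda>i. n - i"]) auto
  then show "os_mult x y n = os_mult y x n"
    unfolding os_mult_def by (simp add: mult_ac)
qed

inductive comm_equiv :: "ncterm \<Rightarrow> ncterm \<Rightarrow> bool" where
  refl: "comm_equiv t t"
| sym: "comm_equiv s t \<Longrightarrow> comm_equiv t s"
| trans: "comm_equiv s t \<Longrightarrow> comm_equiv t u \<Longrightarrow> comm_equiv s u"
| swap: "comm_equiv (M a b) (M b a)"
| congL: "comm_equiv a a' \<Longrightarrow> comm_equiv (M a b) (M a' b)"
| congR: "comm_equiv b b' \<Longrightarrow> comm_equiv (M a b) (M a b')"

lemma os_evt_comm_equiv: "comm_equiv s t \<Longrightarrow> os_evt v s = os_evt v t"
  by (induction rule: comm_equiv.induct) (simp_all add: os_mult_commute)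

lemma fin_poly_mon: "fin_poly (mon t)"
  unfolding fin_poly_def mon_def by simp

lemma comm_tideal_mon_diff:
  "comm_equiv s t \<Longrightarrow> (\<lambda>u. mon s u - mon t u) \<in> (comm_tideal :: (ncterm \<Rightarrow> 'k::field) set)"
proof (induction rule: comm_equiv.induct)
  case (refl t)
  show ?case using comm_tideal.zero by simp
next
  case (sym s t)
  then show ?case using comm_tideal.smult[OF sym.IH, of "-1"] by simp
next
  case (trans s t u)
  then show ?case using comm_tideal.add[OF trans.IH] by simp
next
  case (swap a b)
  show ?case by (rule comm_tideal.gen)
next
  case (congL a a' b)
  have "pmul (\<lambda>u. mon a u - mon a' u) (mon b) = (\<lambda>u. mon (M a b) u - mon (M a' b) u :: 'k)"
    by (auto simp: pmul_def mon_def split: ncterm.split)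
  then show ?case using comm_tideal.mulR[OF congL.IH fin_poly_mon[of b]] by simp
next
  case (congR b b' a)
  have "pmul (mon a) (\<lambda>u. mon b u - mon b' u) = (\<lambda>u. mon (M a b) u - mon (M a b') u :: 'k)"
    by (auto simp: pmul_def mon_def split: ncterm.split)
  then show ?case using comm_tideal.mulL[OF congR.IH fin_poly_mon[of a]] by simp
qed

lemma comm_tideal_sum:
  assumes "finite A" "\<And>a. a \<in> A \<Longrightarrow> p a \<in> comm_tideal"
  shows "(\<lambda>t. \<Sum>a\<in>A. p a t) \<in> comm_tideal"
  using assms by (induction A rule: finite_induct) (auto intro: comm_tideal.zero comm_tideal.add)

lemma comm_tideal_if_class_sum_zero:
  fixes p :: "ncterm \<Rightarrow> 'k::field"
  assumes "finite A" "\<And>t. p t \<noteq> 0 \<Longrightarrow> t \<in> A"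
    and "\<And>s t. s \<in> A \<Longrightarrow> t \<in> A \<Longrightarrow> comm_equiv s t"
    and "(\<Sum>t\<in>A. p t) = 0"
  shows "p \<in> comm_tideal"
proof (cases "A = {}")
  case True
  then have "p = (\<lambda>_. 0)" using assms(2) by auto
  then show ?thesis by (simp add: comm_tideal.zero)
next
  case False
  then obtain t0 where "t0 \<in> A" by blast
  have "p = (\<lambda>u. \<Sum>s\<in>A. p s * (mon s u - mon t0 u))"
  proof
    fix u
    have "(\<Sum>s\<in>A. p s * mon s u) = p u"
      using assms(1,2) by (cases "u \<in> A") (auto simp: mon_def if_distrib cong: if_cong)
    moreover have "(\<Sum>s\<in>A. p s * mon t0 u) = 0"
      using assms(4) by (simp flip: sum_distrib_right)
    ultimately show "p u = (\<Sum>s\<in>A. p s * (mon s u - mon t0 u))"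
      by (simp add: right_diff_distrib sum_subtractf)
  qed
  also have "\<dots> \<in> comm_tideal"
    using assms(1,3) \<open>t0 \<in> A\<close>
    by (intro comm_tideal_sum comm_tideal.smult comm_tideal_mon_diff)
  finally show ?thesis .
qed

lemma size_tvars_pos: "size (tvars t) > 0"
  by (induction t) auto

lemma size_tvars_eq_3_cases:
  assumes "size (tvars t) = 3"
  shows "(\<exists>x y z. t = M (V x) (M (V y) (V z))) \<or> (\<exists>x y z. t = M (M (V x) (V y)) (V z))"
proof -
  have var: "\<exists>x. u = V x" if "size (tvars u) = 1" for u
  proof (cases u)
    case (M a b)
    then show ?thesis using that size_tvars_pos[of a] size_tvars_pos[of b] by simp
  qed simp
  have pair: "\<exists>x y. u = M (V x) (V y)" if "size (tvars u) = 2" for u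
  proof (cases u)
    case (M a b)
    then have "size (tvars a) = 1" "size (tvars b) = 1"
      using that size_tvars_pos[of a] size_tvars_pos[of b] by simp_all
    with M var show ?thesis by blast
  qed (use that in simp)
  show ?thesis
  proof (cases t)
    case (M a b)
    then have "size (tvars a) = 1 \<and> size (tvars b) = 2 \<or> size (tvars a) = 2 \<and> size (tvars b) = 1"
      using assms size_tvars_pos[of a] size_tvars_pos[of b] by auto
    with M var pair show ?thesis by blast
  qed (use assms in simp)
qed

text \<open>The variable that is a factor of a degree-3 monomial; the last clause is junk.\<close>
fun outer_var :: "ncterm \<Rightarrow> nat" where
  "outer_var (M a (V k)) = k"
| "outer_var (M (V k) a) = k"
| "outer_var _ = 0"

lemma multilinear3_normal_form:
  assumes "tvars t = {#0, 1, 2#}"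
  obtains i j where "{#i, j, outer_var t#} = {#0, 1, 2#}"
    and "comm_equiv t (M (M (V i) (V j)) (V (outer_var t)))"
proof -
  have "size (tvars t) = 3" using assms by simp
  then consider x y z where "t = M (V x) (M (V y) (V z))" | x y z where "t = M (M (V x) (V y)) (V z)"
    using size_tvars_eq_3_cases by blast
  then show ?thesis
  proof cases
    case 1
    then show ?thesis
      using that[of y z] assms by (simp add: add_mset_commute comm_equiv.swap)
  next
    case 2
    then show ?thesis
      using that[of x y] assms by (simp add: add_mset_commute comm_equiv.refl)
  qed
qed

lemma outer_var_multilinear3:
  assumes "tvars t = {#0, 1, 2#}"
  shows "outer_var t \<in> {0, 1, 2}"
proof -
  obtain i j where ij: "{#i, j, outer_var t#} = {#0, 1, 2#}"
    using multilinear3_normal_form[OF assms] .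
  have "outer_var t \<in># {#i, j, outer_var t#}"
    by simp
  then show ?thesis
    unfolding ij by simp
qed

lemma comm_equiv_multilinear3:
  assumes "tvars s = {#0, 1, 2#}" "tvars t = {#0, 1, 2#}" "outer_var s = outer_var t"
  shows "comm_equiv s t"
proof -
  obtain i j where ij: "{#i, j, outer_var s#} = {#0, 1, 2#}"
    and s: "comm_equiv s (M (M (V i) (V j)) (V (outer_var s)))"
    using multilinear3_normal_form[OF assms(1)] .
  obtain i' j' where ij': "{#i', j', outer_var t#} = {#0, 1, 2#}"
    and t: "comm_equiv t (M (M (V i') (V j')) (V (outer_var t)))"
    using multilinear3_normal_form[OF assms(2)] .
  have "add_mset (outer_var s) {#i, j#} = add_mset (outer_var s) {#i', j'#}"
    using ij ij' assms(3) by (simp add: add_mset_commute)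
  then have "i = i' \<and> j = j' \<or> i = j' \<and> j = i'"
    by (auto simp: add_eq_conv_ex)
  then have "comm_equiv (M (M (V i) (V j)) (V (outer_var s))) (M (M (V i') (V j')) (V (outer_var t)))"
    using assms(3) by (auto intro: comm_equiv.refl comm_equiv.swap comm_equiv.congL)
  with s t show ?thesis
    using comm_equiv.sym comm_equiv.trans by blast
qed

definition os_probe :: "nat \<Rightarrow> nat \<Rightarrow> int \<Rightarrow> 'k::field" where
  "os_probe c = (\<lambda>l. os_e 1 (if l = c then -1 else 0))"

lemma os_probe_in_carrier: "os_probe c l \<in> os_carrier"
  unfolding os_probe_def by (simp add: os_e_in_carrier)

lemma os_evt_probe_multilinear3:
  assumes "tvars t = {#0, 1, 2#}" "c \<in> {0, 1, 2}"
  shows "os_evt (os_probe c) t (-1) = (if outer_var t = c then 2 else (1::'k::field))"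
proof -
  obtain i j where ij: "{#i, j, outer_var t#} = {#0, 1, 2#}"
    and t: "comm_equiv t (M (M (V i) (V j)) (V (outer_var t)))"
    using multilinear3_normal_form[OF assms(1)] .
  from ij have "(i, j, outer_var t) \<in> {(0, 1, 2), (1, 0, 2), (0, 2, 1), (2, 0, 1), (1, 2, 0), (2, 1, 0)}"
    by (auto simp: add_eq_conv_ex)
  with assms(2) show ?thesis
    unfolding os_evt_comm_equiv[OF t]
    by (auto simp: os_probe_def os_mult_e; simp add: os_e_def)
qed

lemma multilinear3_support:
  assumes "multilinear3 f"
  shows "finite {t. f t \<noteq> 0}" "f t \<noteq> 0 \<Longrightarrow> tvars t = {#0, 1, 2#}"
  using assms unfolding multilinear3_def fin_poly_def by auto

definition outer_class_sum :: "(ncterm \<Rightarrow> 'k::field) \<Rightarrow> nat \<Rightarrow> 'k" where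
  "outer_class_sum f c = (\<Sum>t | f t \<noteq> 0 \<and> outer_var t = c. f t)"

lemma os_evp_probe_multilinear3:
  assumes "multilinear3 f" "c \<in> {0, 1, 2}"
  shows "os_evp (os_probe c) f (-1) = (\<Sum>t | f t \<noteq> 0. f t) + outer_class_sum f c"
proof -
  note support = multilinear3_support[OF assms(1)]
  have "os_evp (os_probe c) f (-1) = (\<Sum>t | f t \<noteq> 0. f t * (if outer_var t = c then 2 else 1))"
    unfolding os_evp_def
    by (rule sum.cong) (simp_all add: os_evt_probe_multilinear3[OF support(2) assms(2)])
  also have "\<dots> = (\<Sum>t | f t \<noteq> 0. f t) + (\<Sum>t | f t \<noteq> 0. if outer_var t = c then f t else 0)"
    by (simp add: if_distrib algebra_simps flip: sum.distrib cong: if_cong)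
  also have "\<dots> = (\<Sum>t | f t \<noteq> 0. f t) + outer_class_sum f c"
    using sum.inter_filter[OF support(1), of f "\<lambda>t. outer_var t = c"]
    by (simp add: outer_class_sum_def conj_commute)
  finally show ?thesis .
qed

lemma sum_eq_outer_class_sums:
  assumes "multilinear3 f"
  shows "(\<Sum>t | f t \<noteq> 0. f t) = outer_class_sum f 0 + outer_class_sum f 1 + outer_class_sum f 2"
proof -
  note support = multilinear3_support[OF assms]
  have outer: "outer_var ` {t. f t \<noteq> 0} \<subseteq> {0, 1, 2}"
    by (intro image_subsetI outer_var_multilinear3 support(2)) simp
  have "(\<Sum>t | f t \<noteq> 0. f t)
      = (\<Sum>c\<in>outer_var ` {t. f t \<noteq> 0}. \<Sum>t\<in>{t \<in> {t. f t \<noteq> 0}. outer_var t = c}. f t)"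
    by (rule sum.image_gen[OF support(1)])
  also have "\<dots> = (\<Sum>c\<in>outer_var ` {t. f t \<noteq> 0}. outer_class_sum f c)"
    by (simp add: outer_class_sum_def)
  also have "\<dots> = (\<Sum>c\<in>{0, 1, 2}. outer_class_sum f c)"
    using outer by (intro sum.mono_neutral_left) (auto simp: outer_class_sum_def intro!: sum.neutral)
  finally show ?thesis
    by simp
qed

lemma outer_class_sum_eq_0_if_os_identity:
  fixes f :: "ncterm \<Rightarrow> 'k::field"
  assumes "(2::'k) \<noteq> 0" "multilinear3 f" "os_identity f"
  shows "outer_class_sum f c = 0"
proof (cases "c \<in> {0, 1, 2}")
  case True
  define total where "total = (\<Sum>t | f t \<noteq> 0. f t)"
  have probe: "total + outer_class_sum f c' = 0" if "c' \<in> {0, 1, 2}" for c'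
    using os_evp_probe_multilinear3[OF assms(2) that] assms(3) os_probe_in_carrier
    unfolding os_identity_def total_def by metis
  have "(2 * 2) * total = (total + outer_class_sum f 0) + (total + outer_class_sum f 1)
      + (total + outer_class_sum f 2)
      + (total - (outer_class_sum f 0 + outer_class_sum f 1 + outer_class_sum f 2))"
    by (simp add: algebra_simps)
  also have "\<dots> = 0"
    using probe[of 0] probe[of 1] probe[of 2] sum_eq_outer_class_sums[OF assms(2)]
    by (simp add: total_def)
  finally have "total = 0"
    by (simp only: mult_eq_0_iff assms(1) simp_thms)
  with probe[OF True] show ?thesis
    by simp
next
  case False
  have "{t. f t \<noteq> 0 \<and> outer_var t = c} = {}"
    using False outer_var_multilinear3[OF multilinear3_support(2)[OF assms(2)]] by blast
  then show ?thesis
    unfolding outer_class_sum_def by (simp only: sum.empty)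
qed

lemma comm_tideal_if_outer_class_sums_zero:
  fixes f :: "ncterm \<Rightarrow> 'k::field"
  assumes "multilinear3 f" "\<And>c. outer_class_sum f c = 0"
  shows "f \<in> comm_tideal"
proof -
  note support = multilinear3_support[OF assms(1)]
  define part where "part c = (\<lambda>t. if outer_var t = c then f t else 0)" for c
  have "part c \<in> comm_tideal" for c
  proof (rule comm_tideal_if_class_sum_zero)
    show "finite {t. f t \<noteq> 0 \<and> outer_var t = c}"
      using support(1) by (rule rev_finite_subset) blast
    show "part c t \<noteq> 0 \<Longrightarrow> t \<in> {t. f t \<noteq> 0 \<and> outer_var t = c}" for t
      by (simp add: part_def split: if_splits)
    show "comm_equiv s t"
      if "s \<in> {t. f t \<noteq> 0 \<and> outer_var t = c}" "t \<in> {t. f t \<noteq> 0 \<and> outer_var t = c}" for s t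
      using that support(2) by (auto intro: comm_equiv_multilinear3)
    show "(\<Sum>t | f t \<noteq> 0 \<and> outer_var t = c. part c t) = 0"
      using assms(2)[of c] by (simp add: part_def outer_class_sum_def)
  qed
  moreover have "f = (\<lambda>t. \<Sum>c\<in>{0, 1, 2}. part c t)"
  proof
    fix t
    show "f t = (\<Sum>c\<in>{0, 1, 2}. part c t)"
      using outer_var_multilinear3[OF support(2)] by (cases "f t = 0") (auto simp: part_def)
  qed
  ultimately show ?thesis
    using comm_tideal_sum[of "{0, 1, 2}" part] by simp
qed

theorem mainTheorem13:
  fixes f :: "ncterm \<Rightarrow> 'k::field"
  assumes "CHAR('k) \<noteq> 2"
    and "multilinear3 f"
    and "os_identity f"
  shows "f \<in> comm_tideal"
proof -
  have "(2::'k) \<noteq> 0"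
    using assms(1) by (rule two_neq_zero_if_CHAR_neq_2)
  then show ?thesis
    using assms(2,3) by (intro comm_tideal_if_outer_class_sums_zero outer_class_sum_eq_0_if_os_identity)
qed

end
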